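(* There is a constant $C>0$ such that for any distinct integers $n_1,n_2$ there exists an integer $n_3$ with $n_3\bmod\tau\in(n_1\bmod\tau,\,n_2\bmod\tau)$ and $|n_3|<C\max(|n_1|,|n_2|)$.
   Context: $\tau=\frac{1+\sqrt5}{2}$. For real $x$, $x\bmod\tau$ is its image in $\mathbb{R}/\tau\mathbb{Z}$; for $a,b$ in this circle, $(a,b)$ is the open arc from $a$ to $b$ in the positive direction. The constant $C$ is independent of all variables. *)

theory Defs
  imports Complex_Main
begin

definition tau :: real where "tau = (1 + sqrt 5) / 2"

definition mod_tau :: "real \<Rightarrow> real" where
  "mod_tau x = x - tau * of_int \<lfloor>x / tau\<rfloor>"

text \<open>x mod tau lies in the open positive arc from a mod tau to b mod tau on R / tau Z.\<close>
definition in_open_arc :: "real \<Rightarrow> real \<Rightarrow> real \<Rightarrow> bool" where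
  "in_open_arc x a b \<longleftrightarrow> 0 < mod_tau (x - a) \<and> mod_tau (x - a) < mod_tau (b - a)"

end

theory Submission
  imports Defs "HOL-Number_Theory.Fib"
begin

text \<open>The golden ratio is badly approximable: for \<open>d \<noteq> 0\<close> and \<open>q = \<lfloor>d / \<tau>\<rfloor>\<close>, the
  remainder \<open>d - q\<tau>\<close> times its Galois conjugate \<open>d - q + q\<tau>\<close> is the nonzero integer
  \<open>d\<^sup>2 - dq - q\<^sup>2\<close>, so the arc from \<open>n\<^sub>1\<close> to \<open>n\<^sub>2\<close> has length at least of order
  \<open>1 / \<bar>n\<^sub>2 - n\<^sub>1\<bar>\<close>. Conversely the signed Fibonacci numbers \<open>(-1)\<^sup>n F\<^sub>n\<^sub>+\<^sub>1\<close> are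
  congruent to \<open>\<tau>\<^sup>-\<^sup>n\<close> modulo \<open>\<tau>\<close> and bounded by \<open>\<tau>\<^sup>n\<close>; the least \<open>n\<close> with \<open>\<tau>\<^sup>-\<^sup>n\<close>
  shorter than the arc yields a step \<open>k\<close> with \<open>\<bar>k\<bar> = O(\<bar>n\<^sub>2 - n\<^sub>1\<bar>)\<close> from \<open>n\<^sub>1\<close> into the arc.\<close>

lemma tau_gt_1: "1 < tau" and tau_lt_2: "tau < 2"
proof -
  have "sqrt 1 < sqrt (5::real)" "sqrt (5::real) < sqrt 9"
    by (simp_all only: real_sqrt_less_iff)
  then show "1 < tau" "tau < 2" by (simp_all add: tau_def)
qed

lemma tau_squared: "tau\<^sup>2 = tau + 1"
  by (simp add: tau_def power2_eq_square field_simps)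

lemma golden_norm_nonzero:
  fixes d q :: int
  assumes "d \<noteq> 0"
  shows "d\<^sup>2 - d * q - q\<^sup>2 \<noteq> 0"
proof
  assume norm: "d\<^sup>2 - d * q - q\<^sup>2 = 0"
  define g where "g = gcd d q"
  obtain d' q' where dq: "d = d' * g" "q = q' * g" and "coprime d' q'"
    using gcd_coprime_exists[of d q] assms unfolding g_def by auto
  have "g\<^sup>2 * (d'\<^sup>2 - d' * q' - q'\<^sup>2) = 0"
    using norm unfolding dq by (simp add: algebra_simps power2_eq_square)
  then have "d'\<^sup>2 - d' * q' - q'\<^sup>2 = 0"
    using assms unfolding g_def by simp
  moreover have "odd (d'\<^sup>2 - d' * q' - q'\<^sup>2)"
  proof -
    have "\<not> (even d' \<and> even q')"
      using coprime_common_divisor[OF \<open>coprime d' q'\<close>, of 2] by auto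
    then show ?thesis by (auto simp: power2_eq_square)
  qed
  ultimately show False by simp
qed

lemma golden_norm_factorization:
  "(of_int d - of_int q * tau) * (of_int d - of_int q + of_int q * tau) =
    of_int (d\<^sup>2 - d * q - q\<^sup>2)"
proof -
  have "(of_int d - of_int q * tau) * (of_int d - of_int q + of_int q * tau)
      = of_int d ^ 2 - of_int d * of_int q - of_int q ^ 2 * (tau\<^sup>2 - tau)"
    by (simp add: algebra_simps power2_eq_square)
  then show ?thesis by (simp add: tau_squared)
qed

lemma mod_tau_nonneg: "0 \<le> mod_tau x"
  and mod_tau_less_tau: "mod_tau x < tau"
proof -
  have "of_int \<lfloor>x / tau\<rfloor> * tau \<le> x / tau * tau"
    using tau_gt_1 by (intro mult_right_mono) simp_all
  moreover have "x / tau * tau < (of_int \<lfloor>x / tau\<rfloor> + 1) * tau"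
    using tau_gt_1 by (intro mult_strict_right_mono) simp_all
  ultimately show "0 \<le> mod_tau x" "mod_tau x < tau"
    using tau_gt_1 by (simp_all add: mod_tau_def algebra_simps)
qed

lemma mod_tau_eqI:
  assumes "0 \<le> t" "t < tau"
  shows "mod_tau (of_int q * tau + t) = t"
proof -
  have "\<lfloor>(of_int q * tau + t) / tau\<rfloor> = q"
    using assms tau_gt_1 by (intro floor_unique) (simp_all add: field_simps)
  then show ?thesis by (simp add: mod_tau_def)
qed

lemma mod_tau_of_int_lower_bound:
  fixes d :: int
  assumes "d \<noteq> 0"
  shows "1 / (7 * \<bar>d\<bar>) \<le> mod_tau (of_int d)"
proof -
  define q where "q = \<lfloor>of_int d / tau\<rfloor>"
  define r where "r = mod_tau (of_int d)"
  have r: "0 \<le> r" "r < tau" and r_eq: "r = of_int d - of_int q * tau"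
    using mod_tau_nonneg mod_tau_less_tau by (simp_all add: r_def q_def mod_tau_def)
  have "\<bar>of_int q\<bar> \<le> \<bar>of_int q\<bar> * tau"
    using tau_gt_1 by (simp add: mult_le_cancel_left1)
  also have "\<dots> = \<bar>of_int d - r\<bar>"
    using r_eq tau_gt_1 by (simp add: abs_mult)
  finally have "\<bar>real_of_int q\<bar> \<le> \<bar>d\<bar> + 2"
    using r tau_lt_2 by linarith
  then have conj_bound: "\<bar>of_int d - of_int q + of_int q * tau\<bar> \<le> 7 * \<bar>d\<bar>"
    using r_eq r tau_lt_2 assms by linarith
  have "1 \<le> \<bar>real_of_int (d\<^sup>2 - d * q - q\<^sup>2)\<bar>"
    using golden_norm_nonzero[OF assms, of q] by linarith
  also have "\<dots> = r * \<bar>of_int d - of_int q + of_int q * tau\<bar>"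
    unfolding r_eq golden_norm_factorization[symmetric] abs_mult
    using r by (simp add: r_eq)
  also have "\<dots> \<le> r * (7 * \<bar>d\<bar>)"
    using conj_bound r by (intro mult_left_mono) simp_all
  finally show ?thesis
    using assms by (simp add: r_def field_simps)
qed

lemma fib_Suc_le_tau_power: "real (fib (Suc n)) \<le> tau ^ n"
proof (induction n rule: fib.induct)
  case (3 n)
  have "real (fib (Suc (Suc (Suc n)))) = real (fib (Suc (Suc n))) + real (fib (Suc n))"
    by simp
  also have "\<dots> \<le> tau ^ Suc n + tau ^ n"
    using "3.IH" by simp
  also have "\<dots> = tau ^ n * tau\<^sup>2"
    by (simp add: tau_squared algebra_simps)
  finally show ?case
    by (simp add: power2_eq_square algebra_simps)
qed (use tau_gt_1 in simp_all)

lemma fib_Suc_minus_fib_mult_tau: "real (fib (Suc n)) - real (fib n) * tau = (1 - tau) ^ n"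
proof -
  define \<psi> where "\<psi> = 1 - tau"
  have sqrt5: "sqrt 5 = tau - \<psi>" and \<psi>_eq: "(1 - sqrt 5) / 2 = \<psi>"
    by (simp_all add: \<psi>_def tau_def field_simps)
  have binet: "real (fib m) * sqrt 5 = tau ^ m - \<psi> ^ m" for m
    using fib_closed_form[of m] unfolding tau_def[symmetric] \<psi>_eq by simp
  have "(real (fib (Suc n)) - real (fib n) * tau) * sqrt 5
      = real (fib (Suc n)) * sqrt 5 - tau * (real (fib n) * sqrt 5)"
    by (simp add: algebra_simps)
  also have "\<dots> = (tau ^ Suc n - \<psi> ^ Suc n) - tau * (tau ^ n - \<psi> ^ n)"
    by (simp only: binet)
  also have "\<dots> = \<psi> ^ n * sqrt 5"
    by (simp add: sqrt5 algebra_simps)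
  finally show ?thesis by (simp add: \<psi>_def)
qed

lemma mod_tau_signed_fib: "mod_tau (of_int ((-1) ^ n * int (fib (Suc n)))) = 1 / tau ^ n"
proof -
  have "tau - 1 = 1 / tau"
    using tau_squared tau_gt_1 by (simp add: field_simps power2_eq_square)
  then have "(-1) ^ n * (1 - tau) ^ n = 1 / tau ^ n"
    by (simp add: power_one_over flip: power_mult_distrib)
  then have signed_fib_eq: "of_int ((-1) ^ n * int (fib (Suc n)))
      = of_int ((-1) ^ n * int (fib n)) * tau + 1 / tau ^ n"
    using fib_Suc_minus_fib_mult_tau[of n] by (simp add: algebra_simps)
  show ?thesis
    unfolding signed_fib_eq
  proof (rule mod_tau_eqI)
    have "1 / tau ^ n \<le> 1"
      using one_le_power[of tau n] tau_gt_1 by simp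
    then show "1 / tau ^ n < tau"
      using tau_gt_1 by linarith
  qed (use tau_gt_1 in simp)
qed

lemma exists_power_between:
  fixes b x :: real
  assumes "1 < b" "1 \<le> b * x"
  shows "\<exists>n. x < b ^ n \<and> b ^ n \<le> b * x"
proof -
  define n where "n = (LEAST n. x < b ^ n)"
  have "\<exists>n. x < b ^ n"
    using real_arch_pow[OF assms(1)] by blast
  then have x_less: "x < b ^ n"
    unfolding n_def by (rule LeastI_ex)
  have "b ^ n \<le> b * x"
  proof (cases n)
    case (Suc m)
    have "\<not> x < b ^ m"
      using Suc not_less_Least[of m "\<lambda>n. x < b ^ n"] unfolding n_def by simp
    then show ?thesis
      using Suc assms(1) by simp
  qed (use assms in simp)
  with x_less show ?thesis by blast
qed

lemma exists_int_mod_tau_below: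
  assumes "0 < L" "L \<le> tau"
  shows "\<exists>k::int. 0 < mod_tau (of_int k) \<and> mod_tau (of_int k) < L \<and> \<bar>k\<bar> \<le> tau / L"
proof -
  obtain n where n: "1 / L < tau ^ n" "tau ^ n \<le> tau * (1 / L)"
    using exists_power_between[of tau "1 / L"] tau_gt_1 assms by (auto simp: field_simps)
  define k :: int where "k = (-1) ^ n * int (fib (Suc n))"
  have "mod_tau (of_int k) = 1 / tau ^ n"
    unfolding k_def by (rule mod_tau_signed_fib)
  moreover have "\<bar>k\<bar> \<le> tau / L"
    using fib_Suc_le_tau_power[of n] n(2) by (simp add: k_def abs_mult)
  moreover have "0 < 1 / tau ^ n" "1 / tau ^ n < L"
    using n(1) assms(1) tau_gt_1 by (simp_all add: field_simps)
  ultimately show ?thesis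
    by (intro exI[of _ k]) simp
qed

lemma exists_int_mod_tau_below_of_int:
  fixes d :: int
  assumes "d \<noteq> 0"
  shows "\<exists>k::int. 0 < mod_tau (of_int k) \<and> mod_tau (of_int k) < mod_tau (of_int d) \<and>
           \<bar>k\<bar> \<le> 14 * \<bar>d\<bar>"
proof -
  define L where "L = mod_tau (of_int d)"
  have L_lower: "1 / (7 * \<bar>d\<bar>) \<le> L"
    unfolding L_def using assms by (rule mod_tau_of_int_lower_bound)
  moreover have "0 < 1 / (7 * \<bar>real_of_int d\<bar>)"
    using assms by simp
  ultimately have "0 < L"
    by linarith
  then obtain k where k: "0 < mod_tau (of_int k)" "mod_tau (of_int k) < L" "\<bar>k\<bar> \<le> tau / L"
    using exists_int_mod_tau_below[of L] mod_tau_less_tau[of "of_int d"] L_def by auto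
  have "tau / L \<le> 14 * \<bar>d\<bar>"
    using L_lower \<open>0 < L\<close> tau_lt_2 assms by (simp add: field_simps)
  with k show ?thesis
    unfolding L_def by (intro exI[of _ k]) simp
qed

theorem lemma15:
  shows "\<exists>C::real > 0. \<forall>n1 n2 :: int. n1 \<noteq> n2 \<longrightarrow>
           (\<exists>n3 :: int. in_open_arc (of_int n3) (of_int n1) (of_int n2) \<and>
                        real_of_int \<bar>n3\<bar> < C * real_of_int (max \<bar>n1\<bar> \<bar>n2\<bar>))"
proof (intro exI[of _ "30::real"] conjI allI impI)
  fix n1 n2 :: int
  assume "n1 \<noteq> n2"
  then obtain k where k: "0 < mod_tau (of_int k)" "mod_tau (of_int k) < mod_tau (of_int (n2 - n1))"
      "\<bar>k\<bar> \<le> 14 * \<bar>n2 - n1\<bar>"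
    using exists_int_mod_tau_below_of_int[of "n2 - n1"] by auto
  have "in_open_arc (of_int (n1 + k)) (of_int n1) (of_int n2)"
    using k(1,2) by (simp add: in_open_arc_def)
  moreover have "\<bar>n1 + k\<bar> < 30 * max \<bar>n1\<bar> \<bar>n2\<bar>"
  proof -
    have "\<bar>n1 + k\<bar> \<le> \<bar>n1\<bar> + \<bar>k\<bar>" "\<bar>n2 - n1\<bar> \<le> \<bar>n2\<bar> + \<bar>n1\<bar>"
      by (rule abs_triangle_ineq, rule abs_triangle_ineq4)
    moreover have "0 < max \<bar>n1\<bar> \<bar>n2\<bar>"
      using \<open>n1 \<noteq> n2\<close> by auto
    ultimately show ?thesis
      using k(3) max.cobounded1[of "\<bar>n1\<bar>" "\<bar>n2\<bar>"] max.cobounded2[of "\<bar>n2\<bar>" "\<bar>n1\<bar>"] by linarith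
  qed
  ultimately show "\<exists>n3 :: int. in_open_arc (of_int n3) (of_int n1) (of_int n2) \<and>
      real_of_int \<bar>n3\<bar> < 30 * real_of_int (max \<bar>n1\<bar> \<bar>n2\<bar>)"
    by (intro exI[of _ "n1 + k"]) simp
qed simp

end
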